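(* Let $\Phi:\mathbb{R}^N\to\mathbb{R}^M$ and $L:\mathbb{R}^P\to\mathbb{R}^N$ be linear operators, let $\|\cdot\|_A$ be a norm on $\mathbb{R}^P$ with dual norm $\|\cdot\|_A^*$, set $R(x)=\|L^*x\|_A$, and let $C_A>0$ be a constant with $\|u\|_A\ge C_A\|u\|_2$ for all $u\in\mathbb{R}^P$. Let $x_0\in\mathbb{R}^N$, assume $\|\cdot\|_A$ is decomposable at $u_0=L^*x_0$ with associated subspace $T_0$ and vector $e_0\in T_0$, and let $S_0=T_0^\perp$. Suppose there exist $\eta\in\mathbb{R}^M$ and $\alpha\in\partial\|\cdot\|_A(L^*x_0)$ with $\Phi^*\eta=L\alpha$ and $\|\alpha_{S_0}\|_A^*<1$. Let $y\in\mathbb{R}^M$, $\lambda>0$, and let $x^\star$ be a minimizer of $\min_{x\in\mathbb{R}^N}\tfrac12\|y-\Phi x\|_2^2+\lambda R(x)$. Then $$\|L_{S_0}^*(x^\star-x_0)\|_2\le\frac{D^A_\alpha(L^*x^\star,L^*x_0)}{C_A\,(1-\|\alpha_{S_0}\|_A^* )}.$$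
   Context: For a subspace $V\subset\mathbb{R}^P$, $P_V$ denotes the orthogonal projector onto $V$, and $L_V=LP_V$, $L_V^*=P_VL^*$, $\alpha_V=P_V\alpha$ for $\alpha\in\mathbb{R}^P$. A norm $\|\cdot\|_A$ on $\mathbb{R}^P$ is decomposable at $u\in\mathbb{R}^P$ if (i) there exist a subspace $T\subset\mathbb{R}^P$ and a vector $e\in T$ such that $\partial\|\cdot\|_A(u)=\{\alpha\in\mathbb{R}^P:\ \alpha_T=e,\ \|\alpha_{T^\perp}\|_A^*\le 1\}$, and (ii) for every $z\in T^\perp$, $\|z\|_A=\sup\{\langle v,z\rangle: v\in T^\perp,\ \|v\|_A^*\le 1\}$. For $\alpha\in\partial\|\cdot\|_A(u_0)$, the Bregman distance is $D^A_\alpha(u,u_0)=\|u\|_A-\|u_0\|_A-\langle\alpha,u-u_0\rangle$. *)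

theory Defs
  imports "HOL-Analysis.Analysis"
begin

definition is_norm :: "('a::real_inner \<Rightarrow> real) \<Rightarrow> bool" where
  "is_norm nA \<longleftrightarrow> (\<forall>u. nA u = 0 \<longleftrightarrow> u = 0) \<and>
     (\<forall>c u. nA (c *\<^sub>R u) = \<bar>c\<bar> * nA u) \<and>
     (\<forall>u v. nA (u + v) \<le> nA u + nA v)"

definition dual_norm :: "('a::real_inner \<Rightarrow> real) \<Rightarrow> 'a \<Rightarrow> real" where
  "dual_norm nA v = Sup {v \<bullet> z | z. nA z \<le> 1}"

definition subdiff :: "('a::real_inner \<Rightarrow> real) \<Rightarrow> 'a \<Rightarrow> 'a set" where
  "subdiff f u0 = {\<alpha>. \<forall>u. f u \<ge> f u0 + \<alpha> \<bullet> (u - u0)}"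

definition proj :: "'a::euclidean_space set \<Rightarrow> 'a \<Rightarrow> 'a" where
  "proj V x = (THE p. p \<in> V \<and> x - p \<in> orthogonal_comp V)"

definition decomposable_at ::
  "('a::euclidean_space \<Rightarrow> real) \<Rightarrow> 'a \<Rightarrow> 'a set \<Rightarrow> 'a \<Rightarrow> bool" where
  "decomposable_at nA u T e \<longleftrightarrow> subspace T \<and> e \<in> T \<and>
     subdiff nA u = {\<alpha>. proj T \<alpha> = e \<and> dual_norm nA (proj (orthogonal_comp T) \<alpha>) \<le> 1} \<and>
     (\<forall>z \<in> orthogonal_comp T.
        nA z = Sup {v \<bullet> z | v. v \<in> orthogonal_comp T \<and> dual_norm nA v \<le> 1})"

definition bregman :: "('a::real_inner \<Rightarrow> real) \<Rightarrow> 'a \<Rightarrow> 'a \<Rightarrow> 'a \<Rightarrow> real" where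
  "bregman nA \<alpha> u u0 = nA u - nA u0 - \<alpha> \<bullet> (u - u0)"

end

theory Submission
  imports Defs
begin

text \<open>
  With \<open>S = T\<^sup>\<perp>\<close> and \<open>w = P\<^sub>S (u - u\<^sub>0)\<close>, decomposability gives
  \<open>\<parallel>w\<parallel>\<^sub>A = sup {\<langle>v, w\<rangle> | v \<in> S, \<parallel>v\<parallel>\<^sub>A\<^sup>* \<le> 1}\<close>. Every such \<open>v\<close> yields a
  subgradient \<open>e + v\<close> at \<open>u\<^sub>0\<close>, and comparing it with \<open>\<alpha> = e + \<alpha>\<^sub>S\<close> in the
  subgradient inequality gives \<open>\<langle>v - \<alpha>\<^sub>S, w\<rangle> \<le> D\<^sup>A\<^sub>\<alpha>(u, u\<^sub>0)\<close>. Taking the supremum and bounding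
  \<open>\<langle>\<alpha>\<^sub>S, w\<rangle> \<le> \<parallel>\<alpha>\<^sub>S\<parallel>\<^sub>A\<^sup>* \<parallel>w\<parallel>\<^sub>A\<close> yields \<open>(1 - \<parallel>\<alpha>\<^sub>S\<parallel>\<^sub>A\<^sup>*) \<parallel>w\<parallel>\<^sub>A \<le> D\<^sup>A\<^sub>\<alpha>(u, u\<^sub>0)\<close>,
  and \<open>\<parallel>w\<parallel>\<^sub>A \<ge> C\<^sub>A \<parallel>w\<parallel>\<^sub>2\<close> finishes.
\<close>

lemma proj_eqI:
  fixes V :: "'a::euclidean_space set"
  assumes "subspace V" "p \<in> V" "x - p \<in> orthogonal_comp V"
  shows "proj V x = p"
  unfolding proj_def
proof (rule the_equality)
  show "p \<in> V \<and> x - p \<in> orthogonal_comp V" using assms by auto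
next
  fix q assume q: "q \<in> V \<and> x - q \<in> orthogonal_comp V"
  have "q - p \<in> V" using q assms by (simp add: subspace_diff)
  moreover have "q - p = (x - p) - (x - q)" by simp
  hence "q - p \<in> orthogonal_comp V"
    using q assms subspace_orthogonal_comp[of V] by (metis subspace_diff)
  ultimately have "(q - p) \<bullet> (q - p) = 0"
    unfolding orthogonal_comp_def orthogonal_def by auto
  thus "q = p" by simp
qed

lemma proj_in_subspace_and_orthogonal:
  fixes V :: "'a::euclidean_space set"
  assumes "subspace V"
  shows "proj V x \<in> V \<and> x - proj V x \<in> orthogonal_comp V"
proof -
  obtain y z where y: "y \<in> span V" and z: "\<And>w. w \<in> span V \<Longrightarrow> orthogonal z w"
    and x: "x = y + z" using orthogonal_subspace_decomp_exists by blast
  have "y \<in> V" using y assms by (metis span_eq_iff)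
  moreover have "x - y \<in> orthogonal_comp V"
    using z x span_superset unfolding orthogonal_comp_def orthogonal_def by (force simp: inner_commute)
  ultimately show ?thesis using proj_eqI[OF assms] by simp
qed

lemma is_norm_zero: "is_norm nA \<Longrightarrow> nA 0 = 0"
  unfolding is_norm_def by auto

lemma dual_norm_zero:
  assumes "is_norm nA"
  shows "dual_norm nA 0 = 0"
proof -
  have "{(0::'a) \<bullet> z | z. nA z \<le> 1} = {0}"
    using is_norm_zero[OF assms] by (auto intro!: exI[of _ 0])
  thus ?thesis unfolding dual_norm_def by simp
qed

text \<open>The lower bound by a multiple of the Euclidean norm makes the dual norm finite.\<close>

lemma inner_le_dual_norm_mult:
  fixes nA :: "'a::real_inner \<Rightarrow> real"
  assumes norm_A: "is_norm nA" and CA_pos: "CA > 0"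
    and CA_bound: "\<forall>u. nA u \<ge> CA * norm u"
  shows "v \<bullet> z \<le> dual_norm nA v * nA z"
proof -
  let ?X = "{v \<bullet> z | z. nA z \<le> 1}"
  have bdd: "bdd_above ?X"
  proof (rule bdd_aboveI)
    fix t assume "t \<in> ?X"
    then obtain w where t: "t = v \<bullet> w" and w: "nA w \<le> 1" by auto
    have "CA * norm w \<le> 1" using CA_bound w by (meson order_trans)
    hence "norm w \<le> 1 / CA" using CA_pos by (simp add: pos_le_divide_eq mult.commute)
    have "t \<le> norm v * norm w" using t norm_cauchy_schwarz by simp
    also have "\<dots> \<le> norm v * (1 / CA)" using \<open>norm w \<le> 1 / CA\<close> by (intro mult_left_mono) auto
    finally show "t \<le> norm v * (1 / CA)" .
  qed
  show ?thesis
  proof (cases "z = 0")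
    case True
    thus ?thesis using is_norm_zero[OF norm_A] by simp
  next
    case False
    hence pos: "nA z > 0" using CA_bound CA_pos by (smt (verit) mult_pos_pos zero_less_norm_iff)
    have "nA ((1 / nA z) *\<^sub>R z) = \<bar>1 / nA z\<bar> * nA z"
      using norm_A unfolding is_norm_def by blast
    hence "nA ((1 / nA z) *\<^sub>R z) \<le> 1" using pos by simp
    hence "v \<bullet> ((1 / nA z) *\<^sub>R z) \<le> dual_norm nA v"
      unfolding dual_norm_def using bdd by (blast intro: cSup_upper)
    hence "(v \<bullet> z) / nA z \<le> dual_norm nA v" by (simp add: divide_inverse_commute)
    thus ?thesis using pos by (simp add: pos_divide_le_eq mult.commute)
  qed
qed

lemma decomposable_at_subdiff_proj:
  fixes nA :: "'a::euclidean_space \<Rightarrow> real"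
  assumes decomp: "decomposable_at nA u0 T e" and \<alpha>: "\<alpha> \<in> subdiff nA u0"
  shows "proj T \<alpha> = e" and "proj (orthogonal_comp T) \<alpha> = \<alpha> - e"
proof -
  have T: "subspace T" and "e \<in> T"
    and sd: "subdiff nA u0 = {\<alpha>. proj T \<alpha> = e \<and> dual_norm nA (proj (orthogonal_comp T) \<alpha>) \<le> 1}"
    using decomp unfolding decomposable_at_def by auto
  show "proj T \<alpha> = e" using \<alpha> sd by auto
  hence "\<alpha> - e \<in> orthogonal_comp T" using proj_in_subspace_and_orthogonal[OF T] by metis
  moreover have "e \<in> orthogonal_comp (orthogonal_comp T)"
    using \<open>e \<in> T\<close> orthogonal_comp_subset by blast
  ultimately show "proj (orthogonal_comp T) \<alpha> = \<alpha> - e"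
    by (intro proj_eqI) (auto simp: subspace_orthogonal_comp)
qed

lemma inner_proj_le_bregman:
  fixes nA :: "'a::euclidean_space \<Rightarrow> real" and T :: "'a set"
  defines "S \<equiv> orthogonal_comp T"
  assumes decomp: "decomposable_at nA u0 T e" and \<alpha>: "\<alpha> \<in> subdiff nA u0"
    and v: "v \<in> S" "dual_norm nA v \<le> 1"
  shows "(v - proj S \<alpha>) \<bullet> proj S (u - u0) \<le> bregman nA \<alpha> u u0"
proof -
  have T: "subspace T" and "e \<in> T"
    and sd: "subdiff nA u0 = {\<alpha>. proj T \<alpha> = e \<and> dual_norm nA (proj S \<alpha>) \<le> 1}"
    using decomp unfolding decomposable_at_def S_def by auto
  have S: "subspace S" unfolding S_def by (rule subspace_orthogonal_comp)
  have "e \<in> orthogonal_comp S" using \<open>e \<in> T\<close> orthogonal_comp_subset unfolding S_def by blast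
  have "proj T (e + v) = e" using \<open>e \<in> T\<close> v T by (intro proj_eqI) (auto simp: S_def)
  moreover have "proj S (e + v) = v" using \<open>e \<in> orthogonal_comp S\<close> v S by (intro proj_eqI) auto
  ultimately have "e + v \<in> subdiff nA u0" using sd v by auto
  hence "nA u \<ge> nA u0 + (e + v) \<bullet> (u - u0)" unfolding subdiff_def by auto
  hence "(e + v - \<alpha>) \<bullet> (u - u0) \<le> bregman nA \<alpha> u u0"
    unfolding bregman_def by (simp add: inner_diff_left)
  moreover have "e + v - \<alpha> = v - proj S \<alpha>"
    using decomposable_at_subdiff_proj(2)[OF decomp \<alpha>] by (simp add: S_def)
  moreover have "v - proj S \<alpha> \<in> S"
    using v S proj_in_subspace_and_orthogonal[OF S] by (metis subspace_diff)
  hence "(v - proj S \<alpha>) \<bullet> (u - u0) = (v - proj S \<alpha>) \<bullet> proj S (u - u0)"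
    using proj_in_subspace_and_orthogonal[OF S, of "u - u0"]
    unfolding orthogonal_comp_def orthogonal_def by (simp add: inner_diff_right)
  ultimately show ?thesis by simp
qed

lemma bregman_ge_decomposable:
  fixes nA :: "'a::euclidean_space \<Rightarrow> real" and T :: "'a set"
  defines "S \<equiv> orthogonal_comp T"
  assumes norm_A: "is_norm nA" and CA_pos: "CA > 0"
    and CA_bound: "\<forall>u. nA u \<ge> CA * norm u"
    and decomp: "decomposable_at nA u0 T e" and \<alpha>: "\<alpha> \<in> subdiff nA u0"
  shows "(1 - dual_norm nA (proj S \<alpha>)) * nA (proj S (u - u0)) \<le> bregman nA \<alpha> u u0"
proof -
  define w where "w = proj S (u - u0)"
  let ?V = "{v \<bullet> w | v. v \<in> S \<and> dual_norm nA v \<le> 1}"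
  have S: "subspace S" unfolding S_def by (rule subspace_orthogonal_comp)
  have "w \<in> S" using proj_in_subspace_and_orthogonal[OF S] w_def by blast
  hence "nA w = Sup ?V" using decomp unfolding decomposable_at_def S_def by auto
  also have "\<dots> \<le> bregman nA \<alpha> u u0 + proj S \<alpha> \<bullet> w"
  proof (rule cSup_least)
    show "?V \<noteq> {}" using dual_norm_zero[OF norm_A] subspace_0[OF S] by force
  next
    fix t assume "t \<in> ?V"
    then obtain v where "t = v \<bullet> w" "v \<in> S" "dual_norm nA v \<le> 1" by blast
    thus "t \<le> bregman nA \<alpha> u u0 + proj S \<alpha> \<bullet> w"
      using inner_proj_le_bregman[OF decomp \<alpha>, of v u] unfolding w_def S_def
      by (simp add: inner_diff_left)
  qed
  finally have "nA w - proj S \<alpha> \<bullet> w \<le> bregman nA \<alpha> u u0" by simp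
  moreover have "proj S \<alpha> \<bullet> w \<le> dual_norm nA (proj S \<alpha>) * nA w"
    by (rule inner_le_dual_norm_mult[OF norm_A CA_pos CA_bound])
  ultimately show ?thesis unfolding w_def by (simp add: algebra_simps)
qed

theorem lemma2:
  fixes Phi :: "real^'n^'m" and L :: "real^'p^'n"
    and nA :: "real^'p \<Rightarrow> real" and CA :: real
    and x0 :: "real^'n" and T0 :: "(real^'p) set" and e0 :: "real^'p"
    and \<eta> :: "real^'m" and \<alpha> :: "real^'p"
    and y :: "real^'m" and lam :: real and xstar :: "real^'n"
  assumes norm_A: "is_norm nA"
    and CA_pos: "CA > 0"
    and CA_bound: "\<forall>u. nA u \<ge> CA * norm u"
    and decomp: "decomposable_at nA (transpose L *v x0) T0 e0"
    and alpha_sub: "\<alpha> \<in> subdiff nA (transpose L *v x0)"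
    and source: "transpose Phi *v \<eta> = L *v \<alpha>"
    and strict: "dual_norm nA (proj (orthogonal_comp T0) \<alpha>) < 1"
    and lam_pos: "lam > 0"
    and minimizer: "\<forall>x. (1/2) * (norm (y - Phi *v xstar))\<^sup>2 + lam * nA (transpose L *v xstar)
                       \<le> (1/2) * (norm (y - Phi *v x))\<^sup>2 + lam * nA (transpose L *v x)"
  shows "norm (proj (orthogonal_comp T0) (transpose L *v (xstar - x0)))
           \<le> bregman nA \<alpha> (transpose L *v xstar) (transpose L *v x0)
              / (CA * (1 - dual_norm nA (proj (orthogonal_comp T0) \<alpha>)))"
proof -
  define u where "u = transpose L *v xstar"
  define u0 where "u0 = transpose L *v x0"
  define w where "w = proj (orthogonal_comp T0) (u - u0)"
  define a where "a = dual_norm nA (proj (orthogonal_comp T0) \<alpha>)"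
  have "transpose L *v (xstar - x0) = u - u0"
    unfolding u_def u0_def by (simp add: matrix_vector_mult_diff_distrib)
  have a: "1 - a > 0" using strict unfolding a_def by simp
  have "CA * (1 - a) * norm w = (1 - a) * (CA * norm w)" by simp
  also have "\<dots> \<le> (1 - a) * nA w" using CA_bound a by (simp add: mult_left_mono)
  also have "\<dots> \<le> bregman nA \<alpha> u u0"
    using bregman_ge_decomposable[OF norm_A CA_pos CA_bound decomp alpha_sub]
    unfolding w_def a_def u0_def by simp
  finally have "norm w \<le> bregman nA \<alpha> u u0 / (CA * (1 - a))"
    using CA_pos a by (simp add: pos_le_divide_eq mult.commute)
  thus ?thesis
    using \<open>transpose L *v (xstar - x0) = u - u0\<close> unfolding w_def a_def u_def u0_def by simp
qed

end
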